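(* Let $d\ge1$, $P\subseteq\mathbb R\times[d]$ and $k\in[d]$. The fractional Helly number of $(P,\mathcal C_{\equiv}(P))$ with respect to $k$-intersecting satisfies $h_{fk}(P,\mathcal C_{\equiv}(P))\le 2d-k+1$.
   Context: $[d]=\{1,\dots,d\}$. A (separated) $d$-interval is a set $I=\bigcup_{i\in[d]}\{(x,i): x\in I^{(i)}\}\subseteq\mathbb R\times[d]$ with each $I^{(i)}\subseteq\mathbb R$ convex (possibly empty); points $(x,i)$ lie in the $i$-th level. For $P\subseteq\mathbb R\times[d]$, $\mathcal C_{\equiv}(P)=\{I\cap P: I \text{ a } d\text{-interval}\}$. A collection of sets of $\mathcal C_{\equiv}(P)$ $k$-intersects (is $k$-intersecting) if its intersection contains at least $k$ points of $P$ lying in $k$ distinct levels. $h_{fk}(P,\mathcal C_{\equiv}(P))$ is the minimal integer $m$ such that there is a function $\beta:(0,1)\to(0,1)$ with the property: every finite $\mathcal F\subseteq\mathcal C_{\equiv}(P)$ having at least $\alpha\binom{|\mathcal F|}{m}$ $k$-intersecting $m$-element subfamilies contains a $k$-intersecting subfamily of size at least $\beta(\alpha)|\mathcal F|$. *)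

theory Defs
  imports "HOL-Analysis.Analysis"
begin

text \<open>Points of \<open>\<real> \<times> [d]\<close> are pairs \<open>(x, i)\<close> with \<open>i \<in> {1..d}\<close> the level.\<close>

definition d_interval :: "nat \<Rightarrow> (real \<times> nat) set \<Rightarrow> bool" where
  "d_interval d I \<longleftrightarrow>
     (\<exists>J :: nat \<Rightarrow> real set. (\<forall>i. convex (J i)) \<and> I = {(x, i). i \<in> {1..d} \<and> x \<in> J i})"

definition C_equiv :: "nat \<Rightarrow> (real \<times> nat) set \<Rightarrow> (real \<times> nat) set set" where
  "C_equiv d P = {I \<inter> P | I. d_interval d I}"

definition k_intersecting :: "(real \<times> nat) set \<Rightarrow> nat \<Rightarrow> (real \<times> nat) set set \<Rightarrow> bool" where
  "k_intersecting P k G \<longleftrightarrow> card (snd ` (P \<inter> \<Inter>G)) \<ge> k"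

definition frac_helly_prop ::
  "(real \<times> nat) set \<Rightarrow> (real \<times> nat) set set \<Rightarrow> nat \<Rightarrow> nat \<Rightarrow> bool" where
  "frac_helly_prop P C k m \<longleftrightarrow>
     (\<exists>\<beta> :: real \<Rightarrow> real. (\<forall>\<alpha>. 0 < \<alpha> \<and> \<alpha> < 1 \<longrightarrow> 0 < \<beta> \<alpha> \<and> \<beta> \<alpha> < 1) \<and>
       (\<forall>F \<alpha>. finite F \<and> F \<subseteq> C \<and> card F \<ge> m \<and> 0 < \<alpha> \<and> \<alpha> < 1 \<and>
          real (card {G. G \<subseteq> F \<and> card G = m \<and> k_intersecting P k G}) \<ge> \<alpha> * real (card F choose m)
          \<longrightarrow> (\<exists>G \<subseteq> F. k_intersecting P k G \<and> real (card G) \<ge> \<beta> \<alpha> * real (card F))))"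

end

theory Submission
  imports Defs
begin

text \<open>One can take \<open>m = k + 1\<close>. Let \<open>G\<close> be a \<open>k\<close>-intersecting family of \<open>k + 1\<close> sets and
  fix \<open>k\<close> levels on which \<open>\<Inter>G\<close> has points. On such a level, all members \<open>A\<close> of \<open>G\<close> but at
  most one contain every point of \<open>P \<inter> \<Inter>(G - {A})\<close> below some point of that intersection:
  for a point \<open>q\<close> of \<open>\<Inter>G\<close>, two exceptions would each miss a point below \<open>q\<close> that the other
  one contains, contradicting convexity. Hence some \<open>A \<in> G\<close> covers these lower parts on all
  \<open>k\<close> levels. Charging \<open>G\<close> to the key \<open>(G - {A}, levels)\<close>, some key \<open>(S, T)\<close> collects at
  least \<open>\<alpha> n / ((k + 1)\<^sup>2 (d choose k))\<close> covering sets, and all of them together with \<open>S\<close>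
  meet on every level of \<open>T\<close>: the lowest of their witness points lies in each of them.\<close>

definition covers_lower_part ::
  "(real \<times> nat) set \<Rightarrow> (real \<times> nat) set set \<Rightarrow> nat \<Rightarrow> (real \<times> nat) set \<Rightarrow> bool" where
  "covers_lower_part P S i A \<longleftrightarrow>
     (\<exists>q. (q, i) \<in> P \<inter> \<Inter>S \<and> (\<forall>p \<le> q. (p, i) \<in> P \<inter> \<Inter>S \<longrightarrow> (p, i) \<in> A))"

lemma C_equiv_level_convex:
  assumes "B \<in> C_equiv d P" "(a, i) \<in> B" "(c, i) \<in> B" "(b, i) \<in> P" "a \<le> b" "b \<le> c"
  shows "(b, i) \<in> B"
proof -
  obtain J where J: "\<forall>i. convex (J i)" "B = {(x, i). i \<in> {1..d} \<and> x \<in> J i} \<inter> P"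
    using assms(1) unfolding C_equiv_def d_interval_def by auto
  then have "a \<in> J i" "c \<in> J i" "i \<in> {1..d}"
    using assms(2,3) by auto
  then have "b \<in> J i"
    using J(1) assms(5,6) by (meson is_interval_convex_1 mem_is_interval_1_I)
  then show ?thesis
    using J(2) assms(4) \<open>i \<in> {1..d}\<close> by auto
qed

lemma uncovered_member_unique:
  assumes "G \<subseteq> C_equiv d P" "(q, i) \<in> P \<inter> \<Inter>G" "A \<in> G" "B \<in> G"
    and "\<not> covers_lower_part P (G - {A}) i A" "\<not> covers_lower_part P (G - {B}) i B"
  shows "A = B"
proof (rule ccontr)
  assume "A \<noteq> B"
  obtain a where a: "(a, i) \<in> P \<inter> \<Inter>(G - {A})" "a \<le> q" "(a, i) \<notin> A"
    using assms(2,5) unfolding covers_lower_part_def by blast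
  obtain b where b: "(b, i) \<in> P \<inter> \<Inter>(G - {B})" "b \<le> q" "(b, i) \<notin> B"
    using assms(2,6) unfolding covers_lower_part_def by blast
  have "(a, i) \<in> B" "(b, i) \<in> A" "(q, i) \<in> A" "(q, i) \<in> B"
    using a(1) b(1) assms(2-4) \<open>A \<noteq> B\<close> by auto
  then show False
    using C_equiv_level_convex[of B d P a i q b] C_equiv_level_convex[of A d P b i q a]
      assms(1,3,4) a b by (cases "a \<le> b") auto
qed

lemma k_intersecting_covering_member:
  assumes "G \<subseteq> C_equiv d P" "finite G" "card G = Suc k" "k_intersecting P k G"
  obtains T A where "T \<subseteq> snd ` (P \<inter> \<Inter>G)" "card T = k" "A \<in> G"
    "\<forall>i\<in>T. covers_lower_part P (G - {A}) i A"
proof -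
  obtain T where T: "T \<subseteq> snd ` (P \<inter> \<Inter>G)" "card T = k" "finite T"
    using assms(4) unfolding k_intersecting_def by (metis obtain_subset_with_card_n)
  define Uncovered where "Uncovered i = {A \<in> G. \<not> covers_lower_part P (G - {A}) i A}" for i
  have "card (Uncovered i) \<le> 1" if "i \<in> T" for i
  proof -
    obtain q where "(q, i) \<in> P \<inter> \<Inter>G"
      using \<open>i \<in> T\<close> T(1) by force
    then show ?thesis
      using uncovered_member_unique[OF assms(1)] assms(2)
      unfolding Uncovered_def by (auto simp: card_le_Suc0_iff_eq)
  qed
  then have "card (\<Union>i\<in>T. Uncovered i) < card G"
    using card_UN_le[OF T(3), of Uncovered] sum_bounded_above[of T "\<lambda>i. card (Uncovered i)" 1]
      T(2) assms(3) by simp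
  moreover have "(\<Union>i\<in>T. Uncovered i) \<subseteq> G"
    unfolding Uncovered_def by blast
  ultimately obtain A where "A \<in> G" "A \<notin> (\<Union>i\<in>T. Uncovered i)"
    by (metis less_irrefl subsetI subset_antisym)
  then have "\<forall>i\<in>T. covers_lower_part P (G - {A}) i A"
    unfolding Uncovered_def by blast
  then show thesis
    using that T(1,2) \<open>A \<in> G\<close> by blast
qed

lemma covers_lower_part_common_point:
  assumes "finite As" "As \<noteq> {}" "\<forall>A\<in>As. covers_lower_part P S i A"
  obtains q where "(q, i) \<in> P \<inter> \<Inter>(S \<union> As)"
proof -
  obtain w where w: "\<And>A. A \<in> As \<Longrightarrow>
      (w A, i) \<in> P \<inter> \<Inter>S \<and> (\<forall>p \<le> w A. (p, i) \<in> P \<inter> \<Inter>S \<longrightarrow> (p, i) \<in> A)"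
    using assms(3) unfolding covers_lower_part_def by metis
  define q where "q = Min (w ` As)"
  have "q \<in> w ` As"
    unfolding q_def using assms(1,2) by simp
  then have q: "(q, i) \<in> P \<inter> \<Inter>S"
    using w by blast
  have "(q, i) \<in> A" if "A \<in> As" for A
    using w[OF that] q assms(1) that unfolding q_def by simp
  then show thesis
    using that q by blast
qed

lemma k_intersecting_Un_covering:
  assumes "finite (snd ` P)" "finite As" "As \<noteq> {}" "card T = k"
    and "\<forall>i\<in>T. \<forall>A\<in>As. covers_lower_part P S i A"
  shows "k_intersecting P k (S \<union> As)"
proof -
  have "T \<subseteq> snd ` (P \<inter> \<Inter>(S \<union> As))"
  proof
    fix i assume "i \<in> T"
    then obtain q where "(q, i) \<in> P \<inter> \<Inter>(S \<union> As)"
      using covers_lower_part_common_point[OF assms(2,3)] assms(5) by blast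
    then show "i \<in> snd ` (P \<inter> \<Inter>(S \<union> As))"
      by (rule rev_image_eqI) simp
  qed
  moreover have "finite (snd ` (P \<inter> \<Inter>(S \<union> As)))"
    using assms(1) by (rule finite_subset[rotated]) auto
  ultimately show ?thesis
    unfolding k_intersecting_def using assms(4) card_mono by blast
qed

lemma sum_le_card_mult_max:
  fixes f :: "'a \<Rightarrow> nat"
  assumes "finite K" "K \<noteq> {}"
  obtains x where "x \<in> K" "sum f K \<le> card K * f x"
proof -
  have "Max (f ` K) \<in> f ` K"
    using assms by (intro Max_in) auto
  then obtain x where "x \<in> K" "Max (f ` K) = f x"
    by blast
  then have "\<forall>y\<in>K. f y \<le> f x"
    using assms(1) by (metis Max_ge finite_imageI image_eqI)
  then show thesis
    using that \<open>x \<in> K\<close> sum_bounded_above[of K f "f x"] by simp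
qed

lemma card_k_intersecting_le_sum_covering:
  assumes "P \<subseteq> UNIV \<times> {1..d}" "finite F" "F \<subseteq> C_equiv d P"
  shows "card {G. G \<subseteq> F \<and> card G = Suc k \<and> k_intersecting P k G}
    \<le> (\<Sum>x \<in> {S. S \<subseteq> F \<and> card S = k} \<times> {T. T \<subseteq> {1..d} \<and> card T = k}.
          card {A \<in> F. \<forall>i\<in>snd x. covers_lower_part P (fst x) i A})"
    (is "card ?Good \<le> sum (\<lambda>x. card (?Ext x)) ?Keys")
proof -
  have fin: "finite ?Keys" "\<And>x. finite (?Ext x)"
    using assms(2) by auto
  have "?Good \<subseteq> (\<lambda>((S, T), A). insert A S) ` Sigma ?Keys ?Ext"
  proof
    fix G assume "G \<in> ?Good"
    then have G: "G \<subseteq> F" "card G = Suc k" "k_intersecting P k G" "finite G"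
      using assms(2) finite_subset by auto
    obtain T A where T: "T \<subseteq> snd ` (P \<inter> \<Inter>G)" "card T = k"
      and A: "A \<in> G" "\<forall>i\<in>T. covers_lower_part P (G - {A}) i A"
      using k_intersecting_covering_member[of G d P k] G assms(3) by blast
    have "snd ` (P \<inter> \<Inter>G) \<subseteq> {1..d}"
      using assms(1) by auto
    moreover have "card (G - {A}) = k"
      using G(2,4) A(1) by simp
    ultimately have "(G - {A}, T) \<in> ?Keys"
      using G(1) T by auto
    moreover have "A \<in> ?Ext (G - {A}, T)"
      using G(1) A by auto
    ultimately have "((G - {A}, T), A) \<in> Sigma ?Keys ?Ext"
      by (rule SigmaI)
    then show "G \<in> (\<lambda>((S, T), A). insert A S) ` Sigma ?Keys ?Ext"
      by (rule rev_image_eqI) (use A(1) in auto)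
  qed
  then have "card ?Good \<le> card (Sigma ?Keys ?Ext)"
    using fin by (meson card_image_le card_mono finite_SigmaI finite_imageI le_trans)
  also have "\<dots> = (\<Sum>x \<in> ?Keys. card (?Ext x))"
    using fin by simp
  finally show ?thesis .
qed

lemma k_intersecting_subfamily_counting:
  assumes "P \<subseteq> UNIV \<times> {1..d}" "finite F" "F \<subseteq> C_equiv d P"
    and "{G. G \<subseteq> F \<and> card G = Suc k \<and> k_intersecting P k G} \<noteq> {}"
  obtains G where "G \<subseteq> F" "k_intersecting P k G"
    "card {G. G \<subseteq> F \<and> card G = Suc k \<and> k_intersecting P k G}
       \<le> card G * ((card F choose k) * (d choose k))"
proof -
  define Good where "Good = {G. G \<subseteq> F \<and> card G = Suc k \<and> k_intersecting P k G}"
  define Keys where "Keys = {S. S \<subseteq> F \<and> card S = k} \<times> {T. T \<subseteq> {1..d} \<and> card T = k}"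
  define Ext where "Ext x = {A \<in> F. \<forall>i\<in>snd x. covers_lower_part P (fst x) i A}" for x
  have fin_Keys: "finite Keys" and fin_Ext: "\<And>x. finite (Ext x)"
    unfolding Keys_def Ext_def using assms(2) by auto
  have fin_Good: "finite Good"
    unfolding Good_def using assms(2) by (auto intro: finite_subset[of _ "Pow F"])
  have card_Keys: "card Keys = (card F choose k) * (d choose k)"
    unfolding Keys_def using assms(2) by (simp add: card_cartesian_product n_subsets)
  have Good_le: "card Good \<le> (\<Sum>x\<in>Keys. card (Ext x))"
    using card_k_intersecting_le_sum_covering[OF assms(1-3), of k]
    unfolding Good_def Keys_def Ext_def .
  then have "Keys \<noteq> {}"
    using assms(4) fin_Good unfolding Good_def by auto
  then obtain x where "x \<in> Keys" "(\<Sum>y\<in>Keys. card (Ext y)) \<le> card Keys * card (Ext x)"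
    using sum_le_card_mult_max[where f = "\<lambda>y. card (Ext y)", OF fin_Keys] by blast
  then have x: "x \<in> Keys" "card Good \<le> card (Ext x) * card Keys"
    using Good_le by (simp_all add: mult.commute)
  then have "Ext x \<noteq> {}"
    using assms(4) fin_Good unfolding Good_def by auto
  obtain S T where ST: "x = (S, T)" "S \<subseteq> F" "card T = k"
    using x(1) unfolding Keys_def by auto
  have "snd ` P \<subseteq> {1..d}"
    using assms(1) by auto
  then have "finite (snd ` P)"
    using finite_subset by blast
  moreover have "\<forall>i\<in>T. \<forall>A\<in>Ext x. covers_lower_part P S i A"
    unfolding Ext_def ST(1) by simp
  ultimately have "k_intersecting P k (S \<union> Ext x)"
    using k_intersecting_Un_covering[OF _ fin_Ext \<open>Ext x \<noteq> {}\<close> ST(3)] by blast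
  moreover have "S \<union> Ext x \<subseteq> F"
    using ST(2) unfolding Ext_def ST(1) by auto
  moreover have "card Good \<le> card (S \<union> Ext x) * card Keys"
  proof -
    have "card (Ext x) \<le> card (S \<union> Ext x)"
      using assms(2) \<open>S \<union> Ext x \<subseteq> F\<close> by (intro card_mono) (auto intro: finite_subset)
    then show ?thesis
      using x(2) by (meson le_trans mult_le_mono1)
  qed
  ultimately show thesis
    using that[of "S \<union> Ext x"] card_Keys unfolding Good_def by simp
qed

lemma mult_binomial_le_Suc_square_binomial:
  fixes n k :: nat
  assumes "k < n"
  shows "n * (n choose k) \<le> Suc k ^ 2 * (n choose Suc k)"
proof -
  have "k * 1 \<le> k * (n - k)"
    using assms by (intro mult_le_mono2) simp
  moreover have "Suc k * (n - k) = (n - k) + k * (n - k)"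
    by simp
  ultimately have "n \<le> Suc k * (n - k)"
    using assms by linarith
  then have "n * (n choose k) \<le> Suc k * ((n - k) * (n choose k))"
    by (metis mult.assoc mult_le_mono1)
  also have "(n - k) * (n choose k) = Suc k * (n choose Suc k)"
    by (simp only: binomial_absorption binomial_absorb_comp)
  finally show ?thesis
    by (simp only: power2_eq_square mult.assoc)
qed

lemma frac_helly_prop_C_equiv:
  assumes "P \<subseteq> UNIV \<times> {1..d}" "k \<le> d"
  shows "frac_helly_prop P (C_equiv d P) k (Suc k)"
proof -
  define c where "c = real (Suc k ^ 2 * (d choose k))"
  have "1 \<le> Suc k ^ 2 * (d choose k)"
    using assms(2) by (simp add: Suc_le_eq)
  then have "1 \<le> c"
    unfolding c_def by (metis of_nat_1 of_nat_le_iff)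
  have large: "\<exists>G\<subseteq>F. k_intersecting P k G \<and> \<alpha> / c * real (card F) \<le> real (card G)"
    if F: "finite F" "F \<subseteq> C_equiv d P" "Suc k \<le> card F" and "0 < \<alpha>"
      and dense: "\<alpha> * real (card F choose Suc k)
        \<le> real (card {G. G \<subseteq> F \<and> card G = Suc k \<and> k_intersecting P k G})"
    for F \<alpha>
  proof -
    define n where "n = card F"
    define Good where "Good = {G. G \<subseteq> F \<and> card G = Suc k \<and> k_intersecting P k G}"
    have "0 < \<alpha> * real (n choose Suc k)"
      using \<open>0 < \<alpha>\<close> F(3) unfolding n_def by simp
    then have "0 < real (card Good)"
      using dense unfolding Good_def n_def by linarith
    then have "Good \<noteq> {}"
      by auto
    then obtain G where G: "G \<subseteq> F" "k_intersecting P k G"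
      "card Good \<le> card G * ((n choose k) * (d choose k))"
      using k_intersecting_subfamily_counting[OF assms(1) F(1,2)] unfolding Good_def n_def by blast
    have "\<alpha> * (real n * real (n choose k)) \<le> \<alpha> * real (Suc k ^ 2 * (n choose Suc k))"
      using mult_binomial_le_Suc_square_binomial[of k n] F(3) \<open>0 < \<alpha>\<close> unfolding n_def
      by (intro mult_left_mono) (simp_all flip: of_nat_mult)
    also have "\<dots> \<le> real (Suc k ^ 2) * real (card Good)"
      using dense \<open>0 < \<alpha>\<close> unfolding Good_def n_def by (simp add: mult_left_mono)
    also have "\<dots> \<le> c * real (card G) * real (n choose k)"
    proof -
      have "Suc k ^ 2 * card Good \<le> Suc k ^ 2 * (card G * ((n choose k) * (d choose k)))"
        using G(3) by (rule mult_le_mono2)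
      then show ?thesis
        unfolding c_def of_nat_mult[symmetric] of_nat_le_iff by (simp only: mult_ac)
    qed
    finally have "\<alpha> * real n * real (n choose k) \<le> c * real (card G) * real (n choose k)"
      by (simp add: mult.assoc)
    moreover have "0 < real (n choose k)"
      using F(3) unfolding n_def by simp
    ultimately have "\<alpha> * real n \<le> c * real (card G)"
      by simp
    then have "\<alpha> / c * real n \<le> real (card G)"
      using \<open>1 \<le> c\<close> by (simp add: field_simps)
    then show ?thesis
      using G(1,2) unfolding n_def by blast
  qed
  show ?thesis
    unfolding frac_helly_prop_def
  proof (intro exI[of _ "\<lambda>\<alpha>. \<alpha> / c"] conjI allI impI)
    fix \<alpha> :: real
    assume "0 < \<alpha> \<and> \<alpha> < 1"
    then show "0 < \<alpha> / c" "\<alpha> / c < 1"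
      using \<open>1 \<le> c\<close> by (simp_all add: field_simps)
  qed (use large in blast)
qed

theorem theorem8:
  fixes d k :: nat and P :: "(real \<times> nat) set"
  assumes "d \<ge> 1"
    and "P \<subseteq> UNIV \<times> {1..d}"
    and "k \<in> {1..d}"
  shows "\<exists>m. 1 \<le> m \<and> m \<le> 2 * d - k + 1 \<and> frac_helly_prop P (C_equiv d P) k m"
proof -
  have "k \<le> d" "Suc k \<le> 2 * d - k + 1"
    using assms(3) by auto
  then show ?thesis
    using frac_helly_prop_C_equiv[OF assms(2)] by (intro exI[of _ "Suc k"]) auto
qed

end
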